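(* There exists a completely regular space $X$ (for instance the Niemytzki plane) such that $\mathrm{H}_1(X,\mathbb R)\setminus \mathrm{K}_1^w(X,\mathbb R)\neq\emptyset$.
   Context: $\mathrm{H}_1(X,Y)$: mappings $f:X\to Y$ with $f^{-1}(V)$ an $F_\sigma$-set for every open $V\subseteq Y$. $\mathrm{K}_1^w(X,Y)$: mappings $f:X\to Y$ with $f^{-1}(V)$ a countable union of functionally closed subsets of $X$ for every functionally open $V\subseteq Y$ (functionally closed = zero set of a continuous real function; functionally open = complement of such). *)

theory Defs
  imports "HOL-Analysis.Analysis"
begin

definition functionally_closed :: "'a topology \<Rightarrow> 'a set \<Rightarrow> bool" where
  "functionally_closed X A \<longleftrightarrow>
     (\<exists>g. continuous_map X euclideanreal g \<and> A = {x \<in> topspace X. g x = 0})"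

definition functionally_open :: "'a topology \<Rightarrow> 'a set \<Rightarrow> bool" where
  "functionally_open X A \<longleftrightarrow> A \<subseteq> topspace X \<and> functionally_closed X (topspace X - A)"

definition H1 :: "'a topology \<Rightarrow> 'b topology \<Rightarrow> ('a \<Rightarrow> 'b) \<Rightarrow> bool" where
  "H1 X Y f \<longleftrightarrow> f \<in> topspace X \<rightarrow> topspace Y \<and>
     (\<forall>V. openin Y V \<longrightarrow> fsigma_in X {x \<in> topspace X. f x \<in> V})"

definition K1w :: "'a topology \<Rightarrow> 'b topology \<Rightarrow> ('a \<Rightarrow> 'b) \<Rightarrow> bool" where
  "K1w X Y f \<longleftrightarrow> f \<in> topspace X \<rightarrow> topspace Y \<and>
     (\<forall>V. functionally_open Y V \<longrightarrow>
        (countable union_of functionally_closed X) {x \<in> topspace X. f x \<in> V})"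

end

theory Submission
  imports Defs
begin

text \<open>Instead of the Niemytzki plane we use a simpler space of the same kind: each point \<open>(x, 0)\<close>
of the axis is the limit of a sequence of isolated points above it, and all other points are isolated.
The axis is closed and discrete, so the indicator function of any subset of the axis is in \<open>H\<^sub>1\<close>.
The sequences are drawn from a countable set of dyadic points, so a continuous function, and hence a
countable union of zero sets, is determined on the axis by a single real sequence. As there are only
continuum many such codes, a Cantor diagonal argument yields a subset of the axis whose indicator
function is not in \<open>K\<^sub>1\<^sup>w\<close>.\<close>

lemma inj_real_sequences_to_reals: "\<exists>J :: (nat \<Rightarrow> real) \<Rightarrow> real. inj J"
proof -
  obtain i :: "real \<Rightarrow> nat set" where i: "inj i"
    using nat_sets_eqpoll_reals eqpoll_sym eqpoll_imp_lepoll unfolding lepoll_def by blast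
  obtain b :: "nat set \<Rightarrow> real" where b: "inj b"
    using nat_sets_eqpoll_reals eqpoll_imp_lepoll unfolding lepoll_def by blast
  define pack where "pack h = {prod_encode (k, m) | k m. m \<in> i (h k)}" for h :: "nat \<Rightarrow> real"
  have mem_pack: "prod_encode (k, m) \<in> pack h \<longleftrightarrow> m \<in> i (h k)" for h k m
    unfolding pack_def by (auto simp: prod_encode_eq)
  have "inj pack"
  proof (rule injI)
    fix h h' assume "pack h = pack h'"
    then have "i (h k) = i (h' k)" for k
      using mem_pack[of k _ h] mem_pack[of k _ h'] by blast
    then show "h = h'" using i by (intro ext) (simp add: inj_eq)
  qed
  then show ?thesis using b by (intro exI[of _ "b \<circ> pack"]) (simp add: inj_compose)
qed

lemma diagonal_set_not_coded:
  assumes "inj J"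
  shows "{J h | h. J h \<notin> C h} \<noteq> C h'"
proof
  assume eq: "{J h | h. J h \<notin> C h} = C h'"
  have "J h' \<in> {J h | h. J h \<notin> C h} \<longleftrightarrow> J h' \<notin> C h'"
    using assms by (auto simp: inj_eq)
  then show False using eq by blast
qed

lemma countable_union_of_functionally_closed_zero_sets:
  assumes "(countable union_of functionally_closed X) S"
  obtains G :: "nat \<Rightarrow> 'a \<Rightarrow> real" where "\<And>k. continuous_map X euclideanreal (G k)"
    and "S = {x \<in> topspace X. \<exists>k. G k x = 0}"
proof -
  have "functionally_closed X {}"
    unfolding functionally_closed_def by (intro exI[of _ "\<lambda>_. 1"]) auto
  then obtain T where "\<And>k::nat. functionally_closed X (T k)" and S: "S = \<Union>(range T)"
    using assms countable_union_of_explicit by metis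
  then obtain G where "\<And>k. continuous_map X euclideanreal (G k)"
    and "\<And>k. T k = {x \<in> topspace X. G k x = 0}"
    unfolding functionally_closed_def by metis
  with S show thesis by (intro that[of G]) auto
qed

lemma K1w_indicator_zero_sets:
  assumes "K1w X euclideanreal (indicator A :: 'a \<Rightarrow> real)"
  obtains G :: "nat \<Rightarrow> 'a \<Rightarrow> real" where "\<And>k. continuous_map X euclideanreal (G k)"
    and "A \<inter> topspace X = {x \<in> topspace X. \<exists>k. G k x = 0}"
proof -
  have "continuous_map euclideanreal euclideanreal (\<lambda>t::real. max 0 (t - 1/2))"
    by (intro continuous_intros)
  moreover have "- {1/2 :: real<..} = {t. max 0 (t - 1/2) = 0}"
    by (auto simp: max_def)
  ultimately have "functionally_open euclideanreal {1/2 :: real<..}"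
    unfolding functionally_open_def functionally_closed_def by auto
  then have "(countable union_of functionally_closed X)
      {x \<in> topspace X. indicator A x \<in> {1/2 :: real<..}}"
    using assms unfolding K1w_def by blast
  moreover have "{x \<in> topspace X. indicator A x \<in> {1/2 :: real<..}} = A \<inter> topspace X"
    by (auto simp: indicator_def)
  ultimately have "(countable union_of functionally_closed X) (A \<inter> topspace X)"
    by simp
  then show thesis
    by (rule countable_union_of_functionally_closed_zero_sets) (rule that)
qed

lemma H1_indicator:
  assumes "fsigma_in X A" and "fsigma_in X (topspace X - A)"
  shows "H1 X euclideanreal (indicator A)"
  unfolding H1_def
proof (intro conjI allI impI)
  fix V :: "real set"
  have "A \<subseteq> topspace X" using assms(1) by (rule fsigma_in_subset)
  then have "{x \<in> topspace X. indicator A x \<in> V} =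
      (if 1 \<in> V then A else {}) \<union> (if 0 \<in> V then topspace X - A else {})"
    by (auto simp: indicator_def)
  then show "fsigma_in X {x \<in> topspace X. indicator A x \<in> V}"
    using assms by (simp add: fsigma_in_Un)
qed auto

text \<open>Rounding \<open>x\<close> to a multiple of \<open>2\<^sup>-\<^sup>n\<close> keeps the set of all these points countable,
while the sequences belonging to distinct \<open>x\<close> are eventually disjoint.\<close>

definition dyadic_point :: "nat \<Rightarrow> real \<Rightarrow> real \<times> real" where
  "dyadic_point n x = (of_int \<lfloor>2^n * x\<rfloor> / 2^n, real n + 1)"

definition axis_nbhd :: "nat \<Rightarrow> real \<Rightarrow> (real \<times> real) set" where
  "axis_nbhd N x = insert (x, 0) ((\<lambda>n. dyadic_point n x) ` {N..})"

definition dyadic_open :: "(real \<times> real) set \<Rightarrow> bool" where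
  "dyadic_open U \<longleftrightarrow> (\<forall>x. (x, 0) \<in> U \<longrightarrow> (\<exists>N. axis_nbhd N x \<subseteq> U))"

definition dyadic_space :: "(real \<times> real) topology" where
  "dyadic_space = topology dyadic_open"

lemma snd_dyadic_point [simp]: "snd (dyadic_point n x) = real n + 1"
  by (simp add: dyadic_point_def)

lemma dyadic_point_off_axis [simp]: "dyadic_point n x \<noteq> (y, 0)" "(y, 0) \<noteq> dyadic_point n x"
  by (simp_all add: dyadic_point_def)

lemma axis_nbhd_antimono: "N \<le> M \<Longrightarrow> axis_nbhd M x \<subseteq> axis_nbhd N x"
  by (auto simp: axis_nbhd_def)

lemma axis_nbhdI: "(x, 0) \<in> U \<Longrightarrow> (\<And>n. N \<le> n \<Longrightarrow> dyadic_point n x \<in> U) \<Longrightarrow> axis_nbhd N x \<subseteq> U"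
  unfolding axis_nbhd_def by blast

lemma istopology_dyadic_open: "istopology dyadic_open"
  unfolding istopology_def
proof (intro conjI allI impI ballI)
  fix S T assume S: "dyadic_open S" and T: "dyadic_open T"
  show "dyadic_open (S \<inter> T)" unfolding dyadic_open_def
  proof (intro allI impI)
    fix x assume "(x, 0) \<in> S \<inter> T"
    then obtain N1 N2 where "axis_nbhd N1 x \<subseteq> S" "axis_nbhd N2 x \<subseteq> T"
      using S T unfolding dyadic_open_def by blast
    moreover have "axis_nbhd (max N1 N2) x \<subseteq> axis_nbhd N1 x" "axis_nbhd (max N1 N2) x \<subseteq> axis_nbhd N2 x"
      by (simp_all add: axis_nbhd_antimono)
    ultimately show "\<exists>N. axis_nbhd N x \<subseteq> S \<inter> T" by blast
  qed
next
  fix K assume K: "\<forall>S\<in>K. dyadic_open S"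
  show "dyadic_open (\<Union>K)" unfolding dyadic_open_def
  proof (intro allI impI)
    fix x assume "(x, 0) \<in> \<Union>K"
    then obtain S where "S \<in> K" "(x, 0) \<in> S" by blast
    with K obtain N where "axis_nbhd N x \<subseteq> S" unfolding dyadic_open_def by blast
    with \<open>S \<in> K\<close> show "\<exists>N. axis_nbhd N x \<subseteq> \<Union>K" by blast
  qed
qed

lemma openin_dyadic_space [simp]: "openin dyadic_space = dyadic_open"
  by (simp add: dyadic_space_def istopology_dyadic_open)

lemma topspace_dyadic_space [simp]: "topspace dyadic_space = UNIV"
  using openin_subset[of dyadic_space UNIV] by (auto simp: dyadic_open_def)

lemma closedin_dyadic_space: "closedin dyadic_space S \<longleftrightarrow> dyadic_open (- S)"
  by (simp add: closedin_def Compl_eq_Diff_UNIV)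

lemma dyadic_points_eventually_distinct:
  assumes "x \<noteq> y"
  shows "\<exists>N. \<forall>n\<ge>N. dyadic_point n x \<noteq> dyadic_point n y"
proof -
  obtain N where N: "1 / 2^N < \<bar>x - y\<bar>"
    using real_arch_pow_inv[of "\<bar>x - y\<bar>" "1/2"] assms by (auto simp: power_one_over)
  have "dyadic_point n x \<noteq> dyadic_point n y" if "N \<le> n" for n
  proof
    assume "dyadic_point n x = dyadic_point n y"
    then have "\<lfloor>2^n * x\<rfloor> = \<lfloor>2^n * y\<rfloor>" by (simp add: dyadic_point_def)
    then have "\<bar>2^n * x - 2^n * y\<bar> < 1" by linarith
    then have "2^n * \<bar>x - y\<bar> < 1" by (simp add: abs_mult right_diff_distrib[symmetric])
    then have "\<bar>x - y\<bar> < 1 / 2^n" by (simp add: field_simps)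
    moreover have "(1::real) / 2^n \<le> 1 / 2^N" using that by (simp add: frac_le)
    ultimately show False using N by linarith
  qed
  then show ?thesis by blast
qed

lemma openin_axis_nbhd: "openin dyadic_space (axis_nbhd N x)"
  by (auto simp: dyadic_open_def axis_nbhd_def)

lemma closedin_axis_nbhd: "closedin dyadic_space (axis_nbhd N x)"
  unfolding closedin_dyadic_space dyadic_open_def
proof (intro allI impI)
  fix y assume y: "(y, 0) \<in> - axis_nbhd N x"
  then have "y \<noteq> x" by (auto simp: axis_nbhd_def)
  then obtain M where M: "\<forall>n\<ge>M. dyadic_point n y \<noteq> dyadic_point n x"
    using dyadic_points_eventually_distinct by blast
  have "dyadic_point n y \<notin> axis_nbhd N x" if "max M N \<le> n" for n
  proof
    assume "dyadic_point n y \<in> axis_nbhd N x"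
    then obtain m where "dyadic_point n y = dyadic_point m x"
      by (auto simp: axis_nbhd_def)
    moreover from this have "m = n" using snd_dyadic_point[of n y] by simp
    ultimately show False using M that by auto
  qed
  then show "\<exists>K. axis_nbhd K y \<subseteq> - axis_nbhd N x"
    using y by (intro exI[of _ "max M N"] axis_nbhdI) auto
qed

lemma openin_dyadic_space_singleton: "snd p \<noteq> 0 \<Longrightarrow> openin dyadic_space {p}"
  unfolding openin_dyadic_space dyadic_open_def by (metis singletonD snd_conv)

lemma closedin_dyadic_space_singleton: "closedin dyadic_space {p}"
  unfolding closedin_dyadic_space dyadic_open_def
proof (intro allI impI)
  fix x assume x: "(x, 0) \<in> - {p}"
  obtain N :: nat where N: "snd p < real N" using reals_Archimedean2 by blast
  have "dyadic_point n x \<noteq> p" if "N \<le> n" for n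
    using N that snd_dyadic_point[of n x] by auto
  then show "\<exists>N. axis_nbhd N x \<subseteq> - {p}"
    using x by (intro exI[of _ N] axis_nbhdI) auto
qed

lemma dyadic_space_dim_le_0: "dyadic_space dim_le 0"
proof -
  have "\<exists>U. closedin dyadic_space U \<and> openin dyadic_space U \<and> p \<in> U \<and> U \<subseteq> W"
    if W: "openin dyadic_space W" "p \<in> W" for W p
  proof (cases "snd p = 0")
    case True
    then obtain x where p: "p = (x, 0)" by (metis prod.collapse)
    with W obtain N where "axis_nbhd N x \<subseteq> W"
      unfolding openin_dyadic_space dyadic_open_def by blast
    moreover have "p \<in> axis_nbhd N x" using p by (simp add: axis_nbhd_def)
    ultimately show ?thesis using closedin_axis_nbhd[of N x] openin_axis_nbhd[of N x] by blast
  next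
    case False
    then show ?thesis
      using W closedin_dyadic_space_singleton openin_dyadic_space_singleton by blast
  qed
  then show ?thesis
    unfolding dimension_le_0_neighbourhood_base_of_clopen
    by (subst open_neighbourhood_base_of) blast+
qed

lemma t1_space_dyadic_space: "t1_space dyadic_space"
  by (simp add: t1_space_closedin_singleton closedin_dyadic_space_singleton)

lemma closedin_subset_axis:
  assumes "A \<subseteq> range (\<lambda>x. (x, 0))"
  shows "closedin dyadic_space A"
  unfolding closedin_dyadic_space dyadic_open_def
proof (intro allI impI)
  fix x assume "(x, 0) \<in> - A"
  moreover have "dyadic_point n x \<notin> A" for n
    using assms dyadic_point_off_axis(1) by blast
  ultimately have "axis_nbhd 0 x \<subseteq> - A"
    by (intro axis_nbhdI) simp_all
  then show "\<exists>N. axis_nbhd N x \<subseteq> - A" ..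
qed

text \<open>The \<open>n\<close>-th closed set omits the heights where the tails \<open>axis_nbhd n x\<close> live.\<close>

lemma fsigma_in_off_axis: "fsigma_in dyadic_space (- range (\<lambda>x. (x, 0)))"
proof -
  define F where "F n = {p :: real \<times> real. snd p \<notin> insert 0 ((\<lambda>m. real m + 1) ` {n..})}" for n
  have "closedin dyadic_space (F n)" for n
    unfolding closedin_dyadic_space dyadic_open_def
  proof (intro allI impI)
    fix x assume "(x, 0) \<in> - F n"
    moreover have "dyadic_point m x \<in> - F n" if "n \<le> m" for m
      using that by (auto simp: F_def)
    ultimately have "axis_nbhd n x \<subseteq> - F n"
      by (intro axis_nbhdI)
    then show "\<exists>N. axis_nbhd N x \<subseteq> - F n" ..
  qed
  then have "fsigma_in dyadic_space (\<Union>(range F))"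
    by (intro fsigma_in_Union closed_imp_fsigma_in) auto
  moreover have "- range (\<lambda>x. (x, 0)) \<subseteq> \<Union>(range F)"
  proof
    fix p :: "real \<times> real" assume "p \<in> - range (\<lambda>x. (x, 0))"
    then have "snd p \<noteq> 0" by (metis prod.collapse rangeI ComplD)
    show "p \<in> \<Union>(range F)"
    proof (cases "\<exists>m::nat. snd p = real m + 1")
      case True
      then obtain m :: nat where "snd p = real m + 1" by blast
      with \<open>snd p \<noteq> 0\<close> have "p \<in> F (Suc m)" by (auto simp: F_def)
      then show ?thesis by blast
    next
      case False
      with \<open>snd p \<noteq> 0\<close> have "p \<in> F 0" by (auto simp: F_def)
      then show ?thesis by blast
    qed
  qed
  moreover have "\<Union>(range F) \<subseteq> - range (\<lambda>x. (x, 0))"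
    by (auto simp: F_def)
  ultimately show ?thesis by (metis subset_antisym)
qed

lemma H1_indicator_subset_axis:
  assumes "A \<subseteq> range (\<lambda>x. (x, 0))"
  shows "H1 dyadic_space euclideanreal (indicator A)"
proof (rule H1_indicator)
  show "fsigma_in dyadic_space A"
    using assms by (intro closed_imp_fsigma_in closedin_subset_axis)
  have "closedin dyadic_space (range (\<lambda>x. (x, 0)) - A)"
    by (rule closedin_subset_axis) blast
  then have "fsigma_in dyadic_space ((range (\<lambda>x. (x, 0)) - A) \<union> - range (\<lambda>x. (x, 0)))"
    using closed_imp_fsigma_in fsigma_in_off_axis fsigma_in_Un by blast
  moreover have "(range (\<lambda>x. (x, 0)) - A) \<union> - range (\<lambda>x. (x, 0)) = topspace dyadic_space - A"
    using assms by (simp only: topspace_dyadic_space) blast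
  ultimately show "fsigma_in dyadic_space (topspace dyadic_space - A)" by (simp only:)
qed

lemma continuous_map_dyadic_space_tendsto:
  assumes "continuous_map dyadic_space euclideanreal g"
  shows "(\<lambda>n. g (dyadic_point n x)) \<longlonglongrightarrow> g (x, 0)"
proof (rule LIMSEQ_I)
  fix r :: real assume "0 < r"
  then have "(x, 0) \<in> {p. g p \<in> ball (g (x, 0)) r}" by simp
  moreover have "dyadic_open {p. g p \<in> ball (g (x, 0)) r}"
    using openin_continuous_map_preimage[OF assms, of "ball (g (x, 0)) r"] by simp
  ultimately obtain N where "axis_nbhd N x \<subseteq> {p. g p \<in> ball (g (x, 0)) r}"
    unfolding dyadic_open_def by blast
  then have "norm (g (dyadic_point n x) - g (x, 0)) < r" if "N \<le> n" for n
    using that by (auto simp: axis_nbhd_def dist_real_def abs_minus_commute)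
  then show "\<exists>N. \<forall>n\<ge>N. norm (g (dyadic_point n x) - g (x, 0)) < r" by blast
qed

text \<open>A code \<open>h\<close> lists, for each \<open>k\<close>, the values of a function \<open>G k\<close> at all dyadic points;
\<open>dyadic_index k n x\<close> is the position of \<open>G k (dyadic_point n x)\<close> in that list.\<close>

definition dyadic_index :: "nat \<Rightarrow> nat \<Rightarrow> real \<Rightarrow> nat" where
  "dyadic_index k n x = prod_encode (k, to_nat (\<lfloor>2^n * x\<rfloor>, n))"

definition coded_set :: "(nat \<Rightarrow> real) \<Rightarrow> real set" where
  "coded_set h = {x. \<exists>k. (\<lambda>n. h (dyadic_index k n x)) \<longlonglongrightarrow> 0}"

lemma axis_zero_sets_coded:
  fixes G :: "nat \<Rightarrow> real \<times> real \<Rightarrow> real"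
  assumes "\<And>k. continuous_map dyadic_space euclideanreal (G k)"
  shows "\<exists>h. coded_set h = {x. \<exists>k. G k (x, 0) = 0}"
proof
  define h where "h m = (case prod_decode m of (k, i) \<Rightarrow>
      (case (from_nat i :: int \<times> nat) of (j, n) \<Rightarrow> G k (of_int j / 2^n, real n + 1)))" for m
  have code: "h (dyadic_index k n x) = G k (dyadic_point n x)" for k n x
    by (simp add: h_def dyadic_index_def dyadic_point_def)
  have "(\<lambda>n. h (dyadic_index k n x)) \<longlonglongrightarrow> 0 \<longleftrightarrow> G k (x, 0) = 0" for k x
  proof
    assume "(\<lambda>n. h (dyadic_index k n x)) \<longlonglongrightarrow> 0"
    then have "(\<lambda>n. G k (dyadic_point n x)) \<longlonglongrightarrow> 0" by (simp only: code)
    then show "G k (x, 0) = 0"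
      using continuous_map_dyadic_space_tendsto[OF assms] LIMSEQ_unique by blast
  next
    assume "G k (x, 0) = 0"
    then show "(\<lambda>n. h (dyadic_index k n x)) \<longlonglongrightarrow> 0"
      using continuous_map_dyadic_space_tendsto[OF assms, of k x] by (simp only: code)
  qed
  then show "coded_set h = {x. \<exists>k. G k (x, 0) = 0}"
    unfolding coded_set_def by blast
qed

lemma diagonal_indicator_not_K1w:
  assumes "inj J"
  shows "\<not> K1w dyadic_space euclideanreal
           (indicator ((\<lambda>x. (x, 0)) ` {J h | h. J h \<notin> coded_set h}) :: real \<times> real \<Rightarrow> real)"
proof
  define D where "D = {J h | h. J h \<notin> coded_set h}"
  assume "K1w dyadic_space euclideanreal
    (indicator ((\<lambda>x. (x, 0)) ` {J h | h. J h \<notin> coded_set h}) :: real \<times> real \<Rightarrow> real)"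
  then obtain G :: "nat \<Rightarrow> real \<times> real \<Rightarrow> real"
    where G: "\<And>k. continuous_map dyadic_space euclideanreal (G k)"
      and zero_sets: "(\<lambda>x. (x, 0)) ` D \<inter> topspace dyadic_space =
        {p \<in> topspace dyadic_space. \<exists>k. G k p = 0}"
    unfolding D_def[symmetric] by (rule K1w_indicator_zero_sets) (rule that)
  obtain h where "coded_set h = {x. \<exists>k. G k (x, 0) = 0}"
    using axis_zero_sets_coded[OF G] ..
  also have "\<dots> = D"
    using zero_sets by (auto simp: set_eq_iff)
  finally have "D = coded_set h" by (rule sym)
  then show False
    using diagonal_set_not_coded[OF assms] unfolding D_def by (rule notE[rotated])
qed

theorem mainTheorem4:
  shows "\<exists>X :: (real \<times> real) topology.
           completely_regular_space X \<and> Hausdorff_space X \<and>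
           (\<exists>f. H1 X euclideanreal f \<and> \<not> K1w X euclideanreal f)"
proof -
  obtain J :: "(nat \<Rightarrow> real) \<Rightarrow> real" where J: "inj J"
    using inj_real_sequences_to_reals by blast
  let ?f = "indicator ((\<lambda>x. (x, 0)) ` {J h | h. J h \<notin> coded_set h}) :: real \<times> real \<Rightarrow> real"
  have "completely_regular_space dyadic_space"
    using dyadic_space_dim_le_0 by (rule zero_dimensional_imp_completely_regular_space)
  moreover have "Hausdorff_space dyadic_space"
    using dyadic_space_dim_le_0 t1_space_dyadic_space
    by (simp add: regular_t1_imp_Hausdorff_space zero_dimensional_imp_regular_space)
  moreover have "H1 dyadic_space euclideanreal ?f"
    by (rule H1_indicator_subset_axis) blast
  moreover have "\<not> K1w dyadic_space euclideanreal ?f"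
    using J by (rule diagonal_indicator_not_K1w)
  ultimately show ?thesis by blast
qed

end
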